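(* Let $l,m,k$ be non-negative integers with $2l\le m\le 2k$. Then $$S(k,m,l)=\binom{m}{l}\binom{2k-m+1}{k-m+l}+\sum_{d'=0}^{l-1}\binom{m}{d'}\left[\binom{2k-m+1}{k+1-d'}-\binom{2k-m+1}{k-d'}\right].$$
   Context: A Dyck path of semilength $k$ (Dyck $k$-path) is a lattice path in $\mathbb{Z}^2$ starting at $(0,0)$, ending at $(2k,0)$, never going below the $x$-axis, each of whose $2k$ steps is either a rise $(1,1)$ or a fall $(1,-1)$. For a Dyck $k$-path $D$ and non-negative integers $l\le m\le 2k$, $S(D,m,l)$ denotes the number of intervals of length $m$ in $D$ (i.e. blocks of $m$ consecutive steps of $D$, one for each starting position $s\in\{1,\dots,2k-m+1\}$) that contain exactly $l$ falls; and $S(k,m,l)=\sum_{D} S(D,m,l)$, the sum over all Dyck $k$-paths $D$. Convention: $\binom{x}{y}=0$ for integers $x\ge 0$ and $y<0$, and $\binom{x}{y}=0$ if $y>x\ge 0$. *)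

theory Defs
  imports Main
begin

text \<open>A step is True for a rise (1,1) and False for a fall (1,-1).\<close>

definition falls :: "bool list \<Rightarrow> nat" where
  "falls xs = length (filter Not xs)"

definition rises :: "bool list \<Rightarrow> nat" where
  "rises xs = length (filter id xs)"

definition dyck_paths :: "nat \<Rightarrow> bool list set" where
  "dyck_paths k = {D. length D = 2 * k \<and> rises D = falls D \<and>
      (\<forall>i \<le> length D. falls (take i D) \<le> rises (take i D))}"

definition S_path :: "bool list \<Rightarrow> nat \<Rightarrow> nat \<Rightarrow> nat" where
  "S_path D m l = card {s. s + m \<le> length D \<and> falls (take m (drop s D)) = l}"

definition S_total :: "nat \<Rightarrow> nat \<Rightarrow> nat \<Rightarrow> nat" where
  "S_total k m l = (\<Sum>D\<in>dyck_paths k. S_path D m l)"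

definition ibinom :: "nat \<Rightarrow> int \<Rightarrow> int" where
  "ibinom n j = (if j < 0 then 0 else int (n choose nat j))"

end

theory Submission
  imports Defs
begin

text \<open>Cut a Dyck path D = A @ B @ C around a window B of length m with l falls and rotate the
  rest into R = C @ True # A. Measuring the depth of a word by how far it dips below its
  starting level, R has length 2k - m + 1, k - l falls and depth at least m - 2l + depth B,
  and every such R arises exactly once, since the inserted rise is the step after the last
  minimum of R. The reflection principle counts binomial(N, j - t) words of length N with j
  falls and depth at least t. Hence S(k,m,l) is a sum over the windows B of a binomial
  depending on depth B, and summation by parts over the depth, counted once more by the
  reflection principle, gives the formula.\<close>

lemma falls_simps [simp]:
  "falls [] = 0" "falls (c # xs) = (if c then falls xs else Suc (falls xs))"
  "falls (xs @ ys) = falls xs + falls ys"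
  by (auto simp: falls_def)

lemma rises_simps [simp]:
  "rises [] = 0" "rises (c # xs) = (if c then Suc (rises xs) else rises xs)"
  "rises (xs @ ys) = rises xs + rises ys"
  by (auto simp: rises_def)

lemma length_eq_rises_plus_falls: "length xs = rises xs + falls xs"
  by (induction xs) auto

definition height :: "bool list \<Rightarrow> int" where
  "height xs = int (rises xs) - int (falls xs)"

lemma height_simps [simp]:
  "height [] = 0" "height (c # xs) = (if c then height xs + 1 else height xs - 1)"
  "height (xs @ ys) = height xs + height ys"
  by (auto simp: height_def)

lemma height_eq_length_minus_falls: "height xs = int (length xs) - 2 * int (falls xs)"
  using length_eq_rises_plus_falls[of xs] by (simp add: height_def)

text \<open>depth xs is minus the least height of a prefix of xs: the truncated subtraction takes
  the maximum with 0 contributed by the empty prefix.\<close>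

fun depth :: "bool list \<Rightarrow> nat" where
  "depth [] = 0"
| "depth (c # xs) = (if c then depth xs - 1 else Suc (depth xs))"

lemma neg_height_le_depth: "- height xs \<le> int (depth xs)"
  by (induction xs) auto

lemma depth_le_falls: "depth xs \<le> falls xs"
  by (induction xs) auto

lemma depth_append: "int (depth (xs @ ys)) = max (int (depth xs)) (int (depth ys) - height xs)"
  by (induction xs) auto

lemma depth_prefix_le: "depth xs \<le> depth (xs @ ys)"
  using depth_append[of xs ys] by linarith

lemma depth_attained: "\<exists>i \<le> length xs. height (take i xs) = - int (depth xs)"
proof (induction xs)
  case Nil
  then show ?case by auto
next
  case (Cons c xs)
  then obtain i where i: "i \<le> length xs" "height (take i xs) = - int (depth xs)" by auto
  show ?case
  proof (cases "c \<and> depth xs = 0")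
    case True
    then show ?thesis by (intro exI[of _ 0]) auto
  next
    case False
    then show ?thesis using i by (intro exI[of _ "Suc i"]) auto
  qed
qed

lemma dyck_paths_iff: "D \<in> dyck_paths k \<longleftrightarrow> length D = 2 * k \<and> height D = 0 \<and> depth D = 0"
proof
  assume "D \<in> dyck_paths k"
  then have D: "length D = 2 * k" "rises D = falls D"
    "\<forall>i \<le> length D. falls (take i D) \<le> rises (take i D)"
    by (auto simp: dyck_paths_def)
  obtain i where "i \<le> length D" "height (take i D) = - int (depth D)"
    using depth_attained by blast
  with D(3) have "depth D = 0" unfolding height_def by force
  with D show "length D = 2 * k \<and> height D = 0 \<and> depth D = 0" by (auto simp: height_def)
next
  assume D: "length D = 2 * k \<and> height D = 0 \<and> depth D = 0"
  have "falls (take i D) \<le> rises (take i D)" for i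
  proof -
    have "depth (take i D) = 0"
      using D depth_prefix_le[of "take i D" "drop i D"] by simp
    with neg_height_le_depth[of "take i D"] show ?thesis by (simp add: height_def)
  qed
  with D show "D \<in> dyck_paths k" by (auto simp: dyck_paths_def height_def)
qed

subsection \<open>The reflection principle\<close>

lemma finite_bool_lists_length: "finite {xs :: bool list. length xs = n \<and> P xs}"
  by (rule finite_subset[OF _ finite_lists_length_eq[of "UNIV :: bool set" n]]) auto

lemma card_bool_lists_Suc:
  "card {xs. length xs = Suc n \<and> P xs} =
     card {xs. length xs = n \<and> P (True # xs)} + card {xs. length xs = n \<and> P (False # xs)}"
proof -
  have split: "{xs. length xs = Suc n \<and> P xs} =
      Cons True ` {xs. length xs = n \<and> P (True # xs)} \<union> Cons False ` {xs. length xs = n \<and> P (False # xs)}"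
    by (auto simp: length_Suc_conv) (case_tac y; auto)
  show ?thesis
    unfolding split by (subst card_Un_disjoint) (auto simp: finite_bool_lists_length card_image)
qed

text \<open>The side condition says that the word ends at height n - 2j \<ge> -t; for words ending
  lower every word has depth \<ge> t, and the count is not of this form.\<close>

lemma card_depth_ge:
  assumes "t = 0 \<or> 2 * j \<le> n + t"
  shows "card {xs. length xs = n \<and> falls xs = j \<and> t \<le> depth xs} = (if t \<le> j then n choose (j - t) else 0)"
  using assms
proof (induction n arbitrary: j t)
  case 0
  have "{xs :: bool list. length xs = 0 \<and> falls xs = j \<and> t \<le> depth xs} = (if j = 0 \<and> t = 0 then {[]} else {})"
    by auto
  then show ?case using 0 by (simp add: binomial_eq_0_iff) arith
next
  case (Suc n)
  have rise: "card {xs. length xs = n \<and> falls (True # xs) = j \<and> t \<le> depth (True # xs)}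
      = (if t = 0 then n choose j else if Suc t \<le> j then n choose (j - Suc t) else 0)"
  proof (cases "t = 0")
    case True
    then show ?thesis using Suc.IH[of 0 j] by simp
  next
    case False
    have "{xs. length xs = n \<and> falls (True # xs) = j \<and> t \<le> depth (True # xs)} =
        {xs. length xs = n \<and> falls xs = j \<and> Suc t \<le> depth xs}"
      using False by auto
    then show ?thesis using Suc.IH[of "Suc t" j] Suc.prems False by simp
  qed
  have fall: "card {xs. length xs = n \<and> falls (False # xs) = j \<and> t \<le> depth (False # xs)}
      = (if j = 0 then 0 else if t - 1 \<le> j - 1 then n choose (j - 1 - (t - 1)) else 0)"
  proof (cases j)
    case 0
    then show ?thesis by simp
  next
    case (Suc j')
    have "{xs. length xs = n \<and> falls (False # xs) = j \<and> t \<le> depth (False # xs)} =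
        {xs. length xs = n \<and> falls xs = j' \<and> t - 1 \<le> depth xs}"
      using Suc by auto
    moreover have "t - 1 = 0 \<or> 2 * j' \<le> n + (t - 1)" using Suc.prems Suc by auto
    ultimately show ?thesis using Suc.IH[of "t - 1" j'] Suc by simp
  qed
  have "(if t = 0 then n choose j else if Suc t \<le> j then n choose (j - Suc t) else 0) +
      (if j = 0 then 0 else if t - 1 \<le> j - 1 then n choose (j - 1 - (t - 1)) else 0)
      = (if t \<le> j then Suc n choose (j - t) else 0)"
  proof (cases "t \<le> j")
    case True
    then obtain d where "j = t + d" using le_Suc_ex by blast
    then show ?thesis by (cases d; cases t) auto
  qed auto
  then show ?case by (simp only: card_bool_lists_Suc rise fall)
qed

lemma card_depth_gt:
  assumes "i < l" and "2 * l \<le> m"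
  shows "card {B. length B = m \<and> falls B = l \<and> i < depth B} = m choose (l - Suc i)"
  using card_depth_ge[of "Suc i" l m] assms by (simp add: Suc_le_eq)

subsection \<open>Rotating a window out of a Dyck path\<close>

lemma dyck_split_iff:
  "depth (A @ B @ C) = 0 \<and> height (A @ B @ C) = 0 \<longleftrightarrow>
     depth A = 0 \<and> int (depth B) \<le> height A \<and> int (depth C) = - height C \<and>
     height A + height B + height C = 0"
  using depth_append[of A "B @ C"] depth_append[of B C] neg_height_le_depth[of C] by auto

lemma depth_rotation:
  "depth A = 0 \<Longrightarrow> int (depth C) = - height C \<Longrightarrow> int (depth (C @ True # A)) = - height C"
  using depth_append[of C "True # A"] by auto

text \<open>In C @ True # A with C ending at its minimum and A never below its start, the rise is
  the step after the last visit of the minimum, so the split is unique.\<close>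

lemma rotation_split_not_nested:
  assumes "depth A1 = 0" "C2 = C1 @ True # X" "A1 = X @ True # A2"
    "int (depth C1) = - height C1" "int (depth C2) = - height C2"
  shows False
proof -
  have "depth X = 0" using depth_prefix_le[of X "True # A2"] assms(1,3) by simp
  then have "height X \<ge> 0" using neg_height_le_depth[of X] by simp
  moreover have "depth C1 \<le> depth C2" using depth_prefix_le[of C1 "True # X"] assms(2) by simp
  ultimately show False using assms(2,4,5) by simp
qed

lemma rotation_split_unique:
  assumes "C1 @ True # A1 = C2 @ True # A2" "depth A1 = 0" "depth A2 = 0"
    "int (depth C1) = - height C1" "int (depth C2) = - height C2"
  shows "C1 = C2 \<and> A1 = A2"
proof -
  obtain us where "C1 = C2 @ us \<and> us @ True # A1 = True # A2 \<or> C1 @ us = C2 \<and> True # A1 = us @ True # A2"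
    using assms(1) append_eq_append_conv2[of C1 "True # A1" C2 "True # A2"] by blast
  then show ?thesis
  proof (elim disjE conjE)
    assume us: "C1 = C2 @ us" "us @ True # A1 = True # A2"
    show ?thesis
    proof (cases us)
      case (Cons u X)
      with us have "C1 = C2 @ True # X" "A2 = X @ True # A1" by auto
      with rotation_split_not_nested[of A2 C1 C2 X A1] assms show ?thesis by blast
    qed (use us in simp)
  next
    assume us: "C1 @ us = C2" "True # A1 = us @ True # A2"
    show ?thesis
    proof (cases us)
      case (Cons u X)
      with us have "C2 = C1 @ True # X" "A1 = X @ True # A2" by auto
      with rotation_split_not_nested[of A1 C2 C1 X A2] assms show ?thesis by blast
    qed (use us in simp)
  qed
qed

lemma rotation_split_exists:
  "- height R < int (depth R) \<Longrightarrow>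
     \<exists>C A. R = C @ True # A \<and> depth A = 0 \<and> int (depth C) = - height C"
proof (induction R)
  case Nil
  then show ?case by simp
next
  case (Cons x R)
  show ?case
  proof (cases "- height R < int (depth R)")
    case True
    then obtain C A where CA: "R = C @ True # A" "depth A = 0" "int (depth C) = - height C"
      using Cons.IH by blast
    show ?thesis
    proof (cases "x \<and> depth C = 0")
      case True
      then have "depth R = 0" using CA depth_append[of C "True # A"] by simp
      then show ?thesis using True by (intro exI[of _ "[]"] exI[of _ R]) simp
    next
      case False
      then show ?thesis using CA by (intro exI[of _ "x # C"] exI[of _ A]) auto
    qed
  next
    case False
    then have "int (depth R) = - height R" using neg_height_le_depth[of R] by linarith
    then have "x \<and> depth R = 0" using Cons.prems by (cases x) auto
    then show ?thesis by (intro exI[of _ "[]"] exI[of _ R]) simp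
  qed
qed

lemma S_total_eq_card_Sigma:
  "S_total k m l = card (SIGMA D:dyck_paths k. {s. s + m \<le> length D \<and> falls (take m (drop s D)) = l})"
proof -
  have "finite (dyck_paths k)"
    by (rule finite_subset[OF _ finite_bool_lists_length[of "2 * k" "\<lambda>_. True"]])
      (simp add: dyck_paths_iff subset_iff)
  moreover have "finite {s. s + m \<le> length D \<and> falls (take m (drop s D)) = l}" for D
    by (rule finite_subset[of _ "{..length D}"]) auto
  ultimately show ?thesis
    unfolding S_total_def S_path_def by (simp add: card_SigmaI)
qed

lemma take_drop_window: "take s D @ take m (drop s D) @ drop (s + m) D = D"
  by (metis append_take_drop_id drop_drop add.commute)

lemma dyck_path_cut:
  assumes "D \<in> dyck_paths k"
  shows "depth (take s D) = 0 \<and> int (depth (drop (s + m) D)) = - height (drop (s + m) D)"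
  using assms dyck_split_iff[of "take s D" "take m (drop s D)" "drop (s + m) D"]
  by (simp add: take_drop_window dyck_paths_iff)

lemma rotation_target:
  assumes "D \<in> dyck_paths k" "s + m \<le> length D" "falls (take m (drop s D)) = l" "2 * l \<le> m"
  defines "A \<equiv> take s D" and "B \<equiv> take m (drop s D)" and "C \<equiv> drop (s + m) D"
  shows "length (C @ True # A) = 2 * k - m + 1 \<and> falls (C @ True # A) = k - l \<and>
    m - 2 * l + depth B \<le> depth (C @ True # A)"
proof -
  have D: "D = A @ B @ C" unfolding A_def B_def C_def by (rule take_drop_window[symmetric])
  have "length D = 2 * k" "height D = 0" "depth D = 0"
    using assms(1) by (auto simp: dyck_paths_iff)
  then have split: "depth A = 0" "int (depth B) \<le> height A" "int (depth C) = - height C"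
      "height A + height B + height C = 0"
    and sums: "length A + length B + length C = 2 * k" "falls A + falls B + falls C = k"
    using dyck_split_iff[of A B C] height_eq_length_minus_falls[of D] D by simp_all
  have B: "length B = m" "falls B = l" using assms(2,3) by (auto simp: B_def)
  then have "height B = int (m - 2 * l)"
    using height_eq_length_minus_falls[of B] assms(4) by simp
  then have "int (m - 2 * l + depth B) \<le> int (depth (C @ True # A))"
    using depth_rotation[of A C] split by simp
  then show ?thesis using sums B by simp linarith
qed

lemma rotation_surjective:
  assumes "2 * l \<le> m" "m \<le> 2 * k" "length B = m" "falls B = l"
    "length R = 2 * k - m + 1" "falls R = k - l" "m - 2 * l + depth B \<le> depth R"
  obtains A C where "R = C @ True # A" "A @ B @ C \<in> dyck_paths k"
proof -
  have hB: "height B = int m - 2 * int l" and hR: "height R = 1 - int m + 2 * int l"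
    using height_eq_length_minus_falls[of B] height_eq_length_minus_falls[of R] assms by auto
  then have "- height R < int (depth R)" using assms(1,7) by linarith
  then obtain C A where CA: "R = C @ True # A" "depth A = 0" "int (depth C) = - height C"
    using rotation_split_exists by blast
  moreover have "int (depth R) = - height C" using depth_rotation CA by simp
  ultimately have "depth (A @ B @ C) = 0 \<and> height (A @ B @ C) = 0"
    using dyck_split_iff[of A B C] hB hR assms(1,7) by auto
  moreover have "length (A @ B @ C) = 2 * k" using CA(1) assms(2,3,5) by simp
  ultimately show ?thesis using that CA(1) by (simp add: dyck_paths_iff)
qed

lemma S_total_eq_card_rotations:
  assumes "2 * l \<le> m" and "m \<le> 2 * k"
  shows "S_total k m l = card (SIGMA B:{B. length B = m \<and> falls B = l}.
            {R. length R = 2 * k - m + 1 \<and> falls R = k - l \<and> m - 2 * l + depth B \<le> depth R})"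
    (is "_ = card ?Q")
proof -
  define P where "P = (SIGMA D:dyck_paths k. {s. s + m \<le> length D \<and> falls (take m (drop s D)) = l})"
  define rot where "rot = (\<lambda>(D :: bool list, s). (take m (drop s D), drop (s + m) D @ True # take s D))"
  have "inj_on rot P"
  proof (rule inj_onI, clarify)
    fix D1 s1 D2 s2 assume P: "(D1, s1) \<in> P" "(D2, s2) \<in> P" and eq: "rot (D1, s1) = rot (D2, s2)"
    then have B: "take m (drop s1 D1) = take m (drop s2 D2)"
      and rot_eq: "drop (s1 + m) D1 @ True # take s1 D1 = drop (s2 + m) D2 @ True # take s2 D2"
      by (simp_all add: rot_def)
    have "D1 \<in> dyck_paths k" "D2 \<in> dyck_paths k" using P by (simp_all add: P_def)
    then have CA: "drop (s1 + m) D1 = drop (s2 + m) D2 \<and> take s1 D1 = take s2 D2"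
      using rotation_split_unique[OF rot_eq] dyck_path_cut[of D1 k s1 m] dyck_path_cut[of D2 k s2 m]
      by simp
    moreover have "s1 = length (take s1 D1)" "s2 = length (take s2 D2)"
      using P by (auto simp: P_def)
    ultimately have "s1 = s2" by simp
    then show "D1 = D2 \<and> s1 = s2" using B CA by (metis take_drop_window)
  qed
  moreover have "rot ` P = ?Q"
  proof
    show "rot ` P \<subseteq> ?Q"
      using rotation_target assms by (auto simp: P_def rot_def)
    show "?Q \<subseteq> rot ` P"
    proof
      fix z assume "z \<in> ?Q"
      then obtain B R where z: "z = (B, R)" and B: "length B = m" "falls B = l"
        and "length R = 2 * k - m + 1" "falls R = k - l" "m - 2 * l + depth B \<le> depth R"
        by blast
      then obtain A C where "R = C @ True # A" "A @ B @ C \<in> dyck_paths k"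
        using rotation_surjective assms by metis
      then have "(A @ B @ C, length A) \<in> P" "rot (A @ B @ C, length A) = z"
        using B z by (auto simp: P_def rot_def)
      then show "z \<in> rot ` P" by force
    qed
  qed
  ultimately show ?thesis
    unfolding S_total_eq_card_Sigma P_def[symmetric] by (metis bij_betw_same_card bij_betw_imageI)
qed

subsection \<open>Summation by parts\<close>

lemma ibinom_symmetric: "x + y = int n \<Longrightarrow> ibinom n x = ibinom n y"
proof -
  assume xy: "x + y = int n"
  consider "x < 0" | "y < 0" | "x \<ge> 0" "y \<ge> 0" by linarith
  then show ?thesis
  proof cases
    case 1
    then show ?thesis using xy by (simp add: ibinom_def binomial_eq_0)
  next
    case 2
    then show ?thesis using xy by (simp add: ibinom_def binomial_eq_0)
  next
    case 3
    then have "nat y = n - nat x" "nat x \<le> n" using xy by linarith+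
    then show ?thesis using 3 by (simp add: ibinom_def binomial_symmetric[symmetric])
  qed
qed

lemma sum_comp_by_parts:
  fixes f :: "'a \<Rightarrow> nat" and g :: "nat \<Rightarrow> 'b :: comm_ring_1"
  assumes "finite X" and "\<And>x. x \<in> X \<Longrightarrow> f x \<le> L"
  shows "(\<Sum>x\<in>X. g (f x)) =
    of_nat (card X) * g 0 + (\<Sum>i<L. of_nat (card {x \<in> X. i < f x}) * (g (Suc i) - g i))"
proof -
  have "g (f x) = g 0 + (\<Sum>i<L. if i < f x then g (Suc i) - g i else 0)" if "x \<in> X" for x
  proof -
    have "(\<Sum>i<L. if i < f x then g (Suc i) - g i else 0) = (\<Sum>i<f x. g (Suc i) - g i)"
      using assms(2)[OF that] by (intro sum.mono_neutral_cong_right) auto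
    then show ?thesis by (simp add: sum_lessThan_telescope)
  qed
  then have "(\<Sum>x\<in>X. g (f x)) = (\<Sum>x\<in>X. g 0) + (\<Sum>i<L. \<Sum>x\<in>X. if i < f x then g (Suc i) - g i else 0)"
    by (simp add: sum.distrib sum.swap[of _ X])
  also have "\<dots> = of_nat (card X) * g 0 + (\<Sum>i<L. of_nat (card {x \<in> X. i < f x}) * (g (Suc i) - g i))"
    using assms(1) by (simp add: sum.If_cases Int_def)
  finally show ?thesis .
qed

lemma S_total_eq_sum_depth:
  assumes "2 * l \<le> m" and "m \<le> 2 * k"
  shows "int (S_total k m l) =
    (\<Sum>B\<in>{B. length B = m \<and> falls B = l}. ibinom (2 * k - m + 1) (int k - int m + int l - int (depth B)))"
proof -
  have "int (card {R. length R = 2 * k - m + 1 \<and> falls R = k - l \<and> m - 2 * l + depth B \<le> depth R}) =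
      ibinom (2 * k - m + 1) (int k - int m + int l - int (depth B))" for B
  proof -
    have "m - 2 * l + depth B = 0 \<or> 2 * (k - l) \<le> 2 * k - m + 1 + (m - 2 * l + depth B)"
      using assms by linarith
    note count = card_depth_ge[OF this]
    show ?thesis
    proof (cases "m - 2 * l + depth B \<le> k - l")
      case True
      then have "k - l - (m - 2 * l + depth B) = nat (int k - int m + int l - int (depth B))"
        and "\<not> int k - int m + int l - int (depth B) < 0"
        using assms by linarith+
      then show ?thesis unfolding count using True by (simp add: ibinom_def)
    next
      case False
      then have "int k - int m + int l - int (depth B) < 0" using assms by linarith
      then show ?thesis unfolding count using False by (simp add: ibinom_def)
    qed
  qed
  then show ?thesis
    using assms finite_bool_lists_length
    by (simp add: S_total_eq_card_rotations card_SigmaI)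
qed

theorem mainTheorem2:
  fixes k m l :: nat
  assumes "2 * l \<le> m" and "m \<le> 2 * k"
  shows "int (S_total k m l) =
           int (m choose l) * ibinom (2 * k - m + 1) (int k - int m + int l)
         + (\<Sum>d'<l. int (m choose d') *
              (ibinom (2 * k - m + 1) (int k + 1 - int d') - ibinom (2 * k - m + 1) (int k - int d')))"
proof -
  define n where "n = 2 * k - m + 1"
  define Bs where "Bs = {B. length B = m \<and> falls B = l}"
  define g where "g = (\<lambda>a :: nat. ibinom n (int k - int m + int l - int a))"
  have "int (S_total k m l) = (\<Sum>B\<in>Bs. g (depth B))"
    using S_total_eq_sum_depth[OF assms] by (simp add: Bs_def g_def n_def)
  also have "\<dots> = int (card Bs) * g 0 + (\<Sum>i<l. int (card {B \<in> Bs. i < depth B}) * (g (Suc i) - g i))"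
    by (rule sum_comp_by_parts) (use depth_le_falls in \<open>auto simp: Bs_def finite_bool_lists_length\<close>)
  also have "\<dots> = int (m choose l) * g 0 + (\<Sum>i<l. int (m choose (l - Suc i)) * (g (Suc i) - g i))"
    using card_depth_ge[of 0 l m] card_depth_gt[OF _ assms(1)] by (simp add: Bs_def conj_assoc)
  also have "(\<Sum>i<l. int (m choose (l - Suc i)) * (g (Suc i) - g i)) =
      (\<Sum>i<l. int (m choose (l - Suc i)) *
        (ibinom n (int k + 1 - int (l - Suc i)) - ibinom n (int k - int (l - Suc i))))"
    unfolding g_def n_def using assms
    by (intro sum.cong refl arg_cong2[where f = "(*)"] arg_cong2[where f = "(-)"] ibinom_symmetric)
      (auto simp: of_nat_diff)
  also have "\<dots> = (\<Sum>d'<l. int (m choose d') * (ibinom n (int k + 1 - int d') - ibinom n (int k - int d')))"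
    by (rule sum.nat_diff_reindex)
  finally show ?thesis by (simp add: g_def n_def)
qed

end
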